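(* Let $f\in\mathbb{Z}[x]$ be a cubic polynomial of non-zero discriminant and let $d$ be a square-free integer. There is a constant $C_f$ depending only on $f$ (not on $d$) such that for any two distinct integer points $P=(x,y)\in\mathbb{Z}^2$, $P'=(x',y')\in\mathbb{Z}^2$ on the elliptic curve $E_d: dy^2=f(x)$, \[\hat h(P+P')\le 3\max(\hat h(P),\hat h(P'))+C_f,\] where $\hat h$ is the canonical height on $E_d$ and $+$ is the group law of $E_d$.
   Context: For a point $Q$ of $E_d$, $h_x(Q)=0$ if $Q$ is the point at infinity $O$ (the origin of the group law), and $h_x(Q)=\log\max(|x_0|,|x_1|)$ if $Q=(x,y)$ with $x=x_0/x_1$, $\gcd(x_0,x_1)=1$. The canonical height is $\hat h(Q)=\frac12\lim_{n\to\infty}4^{-n}h_x([2^n]Q)$. *)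

theory Defs
  imports Complex_Main "HOL-Computational_Algebra.Computational_Algebra"
begin

definition cubic_disc :: "int poly \<Rightarrow> int" where
  "cubic_disc f = (let a = coeff f 3; b = coeff f 2; c = coeff f 1; e = coeff f 0 in
     b^2 * c^2 - 4 * a * c^3 - 4 * b^3 * e - 27 * a^2 * e^2 + 18 * a * b * c * e)"

text \<open>Rational points of E_d : d y^2 = f(x); Zero_pt is the point at infinity.\<close>
datatype ecpt = Zero_pt | Pt rat rat

definition on_curve :: "int poly \<Rightarrow> int \<Rightarrow> ecpt \<Rightarrow> bool" where
  "on_curve f d P = (case P of Zero_pt \<Rightarrow> True
     | Pt x y \<Rightarrow> of_int d * y^2 = poly (map_poly of_int f) x)"

text \<open>Chord-and-tangent group law on d y^2 = a x^3 + b x^2 + c x + e with origin Zero_pt.\<close>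
fun ec_add :: "int poly \<Rightarrow> int \<Rightarrow> ecpt \<Rightarrow> ecpt \<Rightarrow> ecpt" where
  "ec_add f d Zero_pt Q = Q"
| "ec_add f d P Zero_pt = P"
| "ec_add f d (Pt x1 y1) (Pt x2 y2) =
     (if x1 = x2 \<and> y1 + y2 = 0 then Zero_pt
      else (let fq = map_poly (of_int :: int \<Rightarrow> rat) f;
                l = (if x1 = x2 then poly (pderiv fq) x1 / (2 * of_int d * y1)
                     else (y2 - y1) / (x2 - x1));
                x3 = (of_int d * l^2 - coeff fq 2) / coeff fq 3 - x1 - x2;
                y3 = l * (x1 - x3) - y1
            in Pt x3 y3))"

fun hx :: "ecpt \<Rightarrow> real" where
  "hx Zero_pt = 0"
| "hx (Pt x y) = (let (p, q) = quotient_of x in ln (real_of_int (max \<bar>p\<bar> \<bar>q\<bar>)))"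

definition canon_height :: "int poly \<Rightarrow> int \<Rightarrow> ecpt \<Rightarrow> real" where
  "canon_height f d Q =
     (1/2) * lim (\<lambda>n. hx (((\<lambda>R. ec_add f d R R) ^^ n) Q) / 4 ^ n)"

end

theory Submission
  imports Defs
begin

text \<open>
  Write f = a x^3 + b x^2 + c x + e with discriminant \<Delta> \<noteq> 0. If P = (p/q, y) lies on E_d and
  y \<noteq> 0, then x(2P) = N(p,q) / D(p,q) for two binary quartics N, D depending on f only: the
  curve equation d y^2 = f(x) eliminates both y and d. Explicit cubic forms combine N and D into
  4 a^3 \<Delta>^2 p^7 and 4 a^3 \<Delta>^2 q^7, so any common factor of N(p,q) and D(p,q) divides
  4 a^3 \<Delta>^2 and h_x(2P) = 4 h_x(P) + O(1) uniformly in d. Tate's telescoping series then shows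
  that twice the canonical height differs from h_x by a bounded amount, again uniformly in d.
  For distinct integral points the chord formula, with d y^2 replaced by f(x) once more, gives
  x(P + P') as a fraction whose numerator and denominator are O(max(|x|, |x'|)^3), that is
  h_x(P + P') \<le> 3 max(h_x(P), h_x(P')) + O(1); halving yields the estimate for the canonical
  height.
\<close>

lemma abs_ln_sub_le:
  fixes u v A B :: real
  assumes "0 < u" "0 < v" and upper: "v \<le> A * u ^ n" and lower: "u ^ n \<le> B * v"
  shows "\<bar>ln v - n * ln u\<bar> \<le> max (ln A) (ln B)"
proof -
  have "0 < u ^ n" using \<open>0 < u\<close> by simp
  have "0 < A * u ^ n" "0 < B * v" using assms \<open>0 < u ^ n\<close> by linarith+
  then have "0 < A" "0 < B"
    using \<open>0 < u ^ n\<close> \<open>0 < u\<close> \<open>0 < v\<close> by (simp_all add: zero_less_mult_iff)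
  have "ln v \<le> ln (A * u ^ n)" using upper \<open>0 < v\<close> by simp
  also have "\<dots> = ln A + n * ln u" using \<open>0 < A\<close> \<open>0 < u\<close> by (simp add: ln_mult ln_realpow)
  finally have "ln v \<le> ln A + n * ln u" .
  moreover have "n * ln u = ln (u ^ n)" using \<open>0 < u\<close> by (simp add: ln_realpow)
  moreover have "ln (u ^ n) \<le> ln (B * v)" using lower \<open>0 < u ^ n\<close> by simp
  moreover have "ln (B * v) = ln B + ln v" using \<open>0 < B\<close> \<open>0 < v\<close> by (simp add: ln_mult)
  ultimately show ?thesis by linarith
qed

lemma lim_scaled_sequence_bound:
  fixes s :: "nat \<Rightarrow> real" and r K :: real
  assumes "1 < r" and step: "\<And>n. \<bar>s (Suc n) - r * s n\<bar> \<le> K"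
  shows "\<bar>lim (\<lambda>n. s n / r ^ n) - s 0\<bar> \<le> K / (r - 1)"
proof -
  define t where "t = (\<lambda>n. s n / r ^ n)"
  define g where "g n = (K / r) * (1 / r) ^ n" for n
  have "0 < r" using \<open>1 < r\<close> by simp
  have increment_le: "\<bar>t (Suc n) - t n\<bar> \<le> g n" for n
  proof -
    have "t (Suc n) - t n = (s (Suc n) - r * s n) / r ^ Suc n"
      unfolding t_def using \<open>0 < r\<close> by (simp add: field_simps)
    then have "\<bar>t (Suc n) - t n\<bar> \<le> K / r ^ Suc n"
      using step[of n] \<open>0 < r\<close> by (simp add: divide_right_mono)
    also have "\<dots> = g n" unfolding g_def by (simp add: power_divide)
    finally show ?thesis .
  qed
  have "summable g"
    unfolding g_def using \<open>1 < r\<close> by (intro summable_mult summable_geometric) simp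
  have g_sum: "suminf g = K / (r - 1)"
    unfolding g_def using \<open>1 < r\<close>
    by (subst suminf_mult) (simp_all add: suminf_geometric field_simps)
  have "summable (\<lambda>n. t (Suc n) - t n)"
    using increment_le by (intro summable_comparison_test[OF _ \<open>summable g\<close>]) auto
  then have "(\<lambda>n. t n - t 0) \<longlonglongrightarrow> (\<Sum>n. t (Suc n) - t n)"
    using summable_LIMSEQ sum_lessThan_telescope[of t] by fastforce
  then have "(\<lambda>n. (t n - t 0) + t 0) \<longlonglongrightarrow> (\<Sum>n. t (Suc n) - t n) + t 0"
    by (intro tendsto_add tendsto_const)
  then have "lim t = t 0 + (\<Sum>n. t (Suc n) - t n)"
    by (intro limI) (simp add: add.commute)
  moreover have "\<bar>\<Sum>n. t (Suc n) - t n\<bar> \<le> K / (r - 1)"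
    using norm_suminf_le[of "\<lambda>n. t (Suc n) - t n" g] increment_le \<open>summable g\<close> g_sum by simp
  ultimately show ?thesis by (simp add: t_def)
qed

text \<open>\<open>binary_form [w\<^sub>0, \<dots>, w\<^sub>n] p q = w\<^sub>0 p^n + w\<^sub>1 p^(n-1) q + \<dots> + w\<^sub>n q^n\<close>.\<close>

fun binary_form :: "'a::comm_semiring_1 list \<Rightarrow> 'a \<Rightarrow> 'a \<Rightarrow> 'a" where
  "binary_form [] p q = 0"
| "binary_form (w # ws) p q = w * p ^ length ws + q * binary_form ws p q"

lemma abs_binary_form_le:
  fixes p q M :: "'a::linordered_idom"
  assumes "\<bar>p\<bar> \<le> M" "\<bar>q\<bar> \<le> M"
  shows "\<bar>binary_form ws p q\<bar> \<le> sum_list (map abs ws) * M ^ (length ws - 1)"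
proof (induction ws)
  case Nil
  then show ?case by simp
next
  case (Cons w ws)
  have "0 \<le> M" using assms(1) by linarith
  have "\<bar>w * p ^ length ws\<bar> \<le> \<bar>w\<bar> * M ^ length ws"
    unfolding abs_mult power_abs using assms(1) by (intro mult_left_mono power_mono) auto
  moreover have "\<bar>q * binary_form ws p q\<bar> \<le> sum_list (map abs ws) * M ^ length ws"
  proof (cases "ws = []")
    case False
    then have "M ^ length ws = M * M ^ (length ws - 1)" by (cases ws) simp_all
    moreover have "\<bar>q * binary_form ws p q\<bar> \<le> M * (sum_list (map abs ws) * M ^ (length ws - 1))"
      unfolding abs_mult using assms(2) Cons.IH \<open>0 \<le> M\<close> by (intro mult_mono) auto
    ultimately show ?thesis by (simp add: ac_simps)
  qed simp
  ultimately have "\<bar>binary_form (w # ws) p q\<bar>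
      \<le> \<bar>w\<bar> * M ^ length ws + sum_list (map abs ws) * M ^ length ws"
    using abs_triangle_ineq[of "w * p ^ length ws" "q * binary_form ws p q"] by simp
  then show ?case by (simp add: distrib_right)
qed

lemma abs_linear_combination_le:
  fixes U V N D :: "'a::linordered_idom"
  shows "\<bar>U * N + V * D\<bar> \<le> (\<bar>U\<bar> + \<bar>V\<bar>) * max \<bar>N\<bar> \<bar>D\<bar>"
proof -
  have "\<bar>U * N + V * D\<bar> \<le> \<bar>U\<bar> * \<bar>N\<bar> + \<bar>V\<bar> * \<bar>D\<bar>"
    by (metis abs_mult abs_triangle_ineq)
  also have "\<dots> \<le> \<bar>U\<bar> * max \<bar>N\<bar> \<bar>D\<bar> + \<bar>V\<bar> * max \<bar>N\<bar> \<bar>D\<bar>"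
    by (intro add_mono mult_left_mono) auto
  finally show ?thesis by (simp add: distrib_right)
qed

lemma dvd_of_dvd_mult_coprime_powers:
  fixes k R p q :: int
  assumes "coprime p q" "k dvd R * p ^ n" "k dvd R * q ^ n"
  shows "k dvd R"
proof -
  have "k dvd gcd (R * p ^ n) (R * q ^ n)" using assms(2,3) by simp
  also have "gcd (R * p ^ n) (R * q ^ n) = \<bar>R\<bar>"
    using \<open>coprime p q\<close> by (simp add: gcd_mult_distrib_int[symmetric])
  finally show ?thesis by simp
qed

lemma abs_elimination_le:
  fixes p q N D R B :: "'a::linordered_idom"
  defines "M \<equiv> max \<bar>p\<bar> \<bar>q\<bar>"
  assumes elim_p: "U\<^sub>1 * N + V\<^sub>1 * D = R * p ^ (m + n)"
    and elim_q: "U\<^sub>2 * N + V\<^sub>2 * D = R * q ^ (m + n)"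
    and bound_p: "\<bar>U\<^sub>1\<bar> + \<bar>V\<^sub>1\<bar> \<le> B * M ^ m"
    and bound_q: "\<bar>U\<^sub>2\<bar> + \<bar>V\<^sub>2\<bar> \<le> B * M ^ m"
  shows "\<bar>R\<bar> * M ^ (m + n) \<le> B * M ^ m * max \<bar>N\<bar> \<bar>D\<bar>"
proof (cases "\<bar>q\<bar> \<le> \<bar>p\<bar>")
  case True
  then have "\<bar>R\<bar> * M ^ (m + n) = \<bar>U\<^sub>1 * N + V\<^sub>1 * D\<bar>"
    by (simp add: M_def elim_p abs_mult power_abs max_absorb1)
  also have "\<dots> \<le> B * M ^ m * max \<bar>N\<bar> \<bar>D\<bar>"
    by (rule order_trans[OF abs_linear_combination_le mult_right_mono[OF bound_p]]) simp
  finally show ?thesis .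
next
  case False
  then have "\<bar>R\<bar> * M ^ (m + n) = \<bar>U\<^sub>2 * N + V\<^sub>2 * D\<bar>"
    by (simp add: M_def elim_q abs_mult power_abs max_absorb2)
  also have "\<dots> \<le> B * M ^ m * max \<bar>N\<bar> \<bar>D\<bar>"
    by (rule order_trans[OF abs_linear_combination_le mult_right_mono[OF bound_q]]) simp
  finally show ?thesis .
qed

text \<open>
  The common factor k cancelled when N/D is reduced divides R, which turns a Nullstellensatz
  certificate for N and D into a lower bound for the reduced height.
\<close>

lemma coprime_elimination_height_bound:
  fixes p q N D R k p' q' B :: int
  defines "M \<equiv> max \<bar>p\<bar> \<bar>q\<bar>"
  assumes "coprime p q" "R \<noteq> 0"
    and elim_p: "U\<^sub>1 * N + V\<^sub>1 * D = R * p ^ (m + n)"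
    and elim_q: "U\<^sub>2 * N + V\<^sub>2 * D = R * q ^ (m + n)"
    and bound_p: "\<bar>U\<^sub>1\<bar> + \<bar>V\<^sub>1\<bar> \<le> B * M ^ m"
    and bound_q: "\<bar>U\<^sub>2\<bar> + \<bar>V\<^sub>2\<bar> \<le> B * M ^ m"
    and N_eq: "N = k * p'" and D_eq: "D = k * q'"
  shows "M ^ n \<le> B * max \<bar>p'\<bar> \<bar>q'\<bar>"
proof -
  have "k dvd R"
    using \<open>coprime p q\<close>
    by (rule dvd_of_dvd_mult_coprime_powers[where n = "m + n"])
      (simp_all add: N_eq D_eq flip: elim_p elim_q)
  then have k_le: "\<bar>k\<bar> \<le> \<bar>R\<bar>" using \<open>R \<noteq> 0\<close> by (simp add: dvd_imp_le_int)
  have "p \<noteq> 0 \<or> q \<noteq> 0" using \<open>coprime p q\<close> by auto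
  then have "1 \<le> M" unfolding M_def by linarith
  have "0 \<le> B * M ^ m" using bound_p by linarith
  moreover have "0 < M ^ m" using \<open>1 \<le> M\<close> by simp
  ultimately have "0 \<le> B" by (simp add: zero_le_mult_iff)
  have "M ^ m * (\<bar>R\<bar> * M ^ n) = \<bar>R\<bar> * M ^ (m + n)" by (simp add: power_add ac_simps)
  also have "\<dots> \<le> B * M ^ m * max \<bar>N\<bar> \<bar>D\<bar>"
    using abs_elimination_le[OF elim_p elim_q] bound_p bound_q unfolding M_def .
  also have "max \<bar>N\<bar> \<bar>D\<bar> = \<bar>k\<bar> * max \<bar>p'\<bar> \<bar>q'\<bar>"
    using N_eq D_eq by (simp add: abs_mult max_mult_distrib_left)
  also have "B * M ^ m * (\<bar>k\<bar> * max \<bar>p'\<bar> \<bar>q'\<bar>) = M ^ m * (B * (\<bar>k\<bar> * max \<bar>p'\<bar> \<bar>q'\<bar>))"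
    by (simp only: ac_simps)
  finally have "\<bar>R\<bar> * M ^ n \<le> B * (\<bar>k\<bar> * max \<bar>p'\<bar> \<bar>q'\<bar>)"
    by (rule mult_left_le_imp_le) (use \<open>1 \<le> M\<close> in simp)
  also have "\<dots> \<le> B * (\<bar>R\<bar> * max \<bar>p'\<bar> \<bar>q'\<bar>)"
    using k_le \<open>0 \<le> B\<close> by (intro mult_left_mono mult_right_mono) auto
  finally have "\<bar>R\<bar> * M ^ n \<le> \<bar>R\<bar> * (B * max \<bar>p'\<bar> \<bar>q'\<bar>)" by (simp only: ac_simps)
  then show ?thesis using \<open>R \<noteq> 0\<close> by simp
qed

definition rat_height :: "rat \<Rightarrow> int" where
  "rat_height r = (case quotient_of r of (p, q) \<Rightarrow> max \<bar>p\<bar> \<bar>q\<bar>)"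

lemma hx_Pt: "hx (Pt r y) = ln (rat_height r)"
  by (simp add: rat_height_def split: prod.split)

declare hx.simps(2)[simp del]

lemma rat_height_ge_1: "1 \<le> rat_height r"
  using quotient_of_denom_pos[of r] by (force simp: rat_height_def split: prod.split)

lemma hx_nonneg: "0 \<le> hx P"
  using rat_height_ge_1 by (cases P) (simp_all add: hx_Pt)

lemma rat_height_of_int: "rat_height (of_int n) = max \<bar>n\<bar> 1"
  by (simp add: rat_height_def quotient_of_int)

lemma quotient_of_fraction:
  fixes N D :: int
  assumes "D \<noteq> 0" and "quotient_of (of_int N / of_int D) = (p, q)"
  shows "\<exists>k. N = k * p \<and> D = k * q"
proof -
  have "q > 0" "coprime p q" "of_int N / of_int D = (of_int p / of_int q :: rat)"
    using quotient_of_denom_pos quotient_of_coprime quotient_of_div assms(2) by blast+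
  then have "N * q = p * D" using \<open>D \<noteq> 0\<close> by (simp add: field_simps flip: of_int_mult)
  then have "q dvd D"
    using \<open>coprime p q\<close> by (metis coprime_commute coprime_dvd_mult_right_iff dvd_triv_right)
  then obtain k where "D = k * q" by (metis dvd_def mult.commute)
  with \<open>N * q = p * D\<close> \<open>q > 0\<close> have "N = k * p" by (simp add: algebra_simps)
  with \<open>D = k * q\<close> show ?thesis by blast
qed

lemma rat_height_fraction_le:
  fixes N D :: int
  assumes "D \<noteq> 0"
  shows "rat_height (of_int N / of_int D) \<le> max \<bar>N\<bar> \<bar>D\<bar>"
proof -
  obtain p q where pq: "quotient_of (of_int N / of_int D) = (p, q)" by fastforce
  then obtain k where "N = k * p" "D = k * q" using quotient_of_fraction[OF assms] by blast
  then have "max \<bar>N\<bar> \<bar>D\<bar> = \<bar>k\<bar> * max \<bar>p\<bar> \<bar>q\<bar>" "1 \<le> \<bar>k\<bar>"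
    using assms by (auto simp: abs_mult max_mult_distrib_left)
  then have "max \<bar>p\<bar> \<bar>q\<bar> \<le> max \<bar>N\<bar> \<bar>D\<bar>"
    by (simp add: mult_le_cancel_right1)
  then show ?thesis using pq by (simp add: rat_height_def)
qed

lemma tangent_third_point:
  fixes A B C E d x y l x' :: "'a::idom"
  assumes "d * y^2 = A * x^3 + B * x^2 + C * x + E"
    and "2 * d * y * l = 3 * A * x^2 + 2 * B * x + C"
    and "A * x' = d * l^2 - B - 2 * A * x"
  shows "d * (l * (x - x') - y)^2 = A * x'^3 + B * x'^2 + C * x' + E"
  using assms by algebra

lemma chord_third_point:
  fixes A B C E d x\<^sub>1 y\<^sub>1 x\<^sub>2 y\<^sub>2 l x' :: "'a::idom"
  assumes "d * y\<^sub>1^2 = A * x\<^sub>1^3 + B * x\<^sub>1^2 + C * x\<^sub>1 + E"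
    and "d * y\<^sub>2^2 = A * x\<^sub>2^3 + B * x\<^sub>2^2 + C * x\<^sub>2 + E"
    and "l * (x\<^sub>2 - x\<^sub>1) = y\<^sub>2 - y\<^sub>1" and "A * x' = d * l^2 - B - A * x\<^sub>1 - A * x\<^sub>2"
    and "x\<^sub>1 \<noteq> x\<^sub>2"
  shows "d * (l * (x\<^sub>1 - x') - y\<^sub>1)^2 = A * x'^3 + B * x'^2 + C * x' + E"
proof -
  have "(x\<^sub>2 - x\<^sub>1) * (d * (l * (x\<^sub>1 - x') - y\<^sub>1)^2 - (A * x'^3 + B * x'^2 + C * x' + E)) = 0"
    using assms(1-4) by algebra
  then show ?thesis using \<open>x\<^sub>1 \<noteq> x\<^sub>2\<close> by simp
qed

lemma degree_3_poly_eq: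
  fixes p :: "'a::zero poly"
  assumes "degree p = 3"
  shows "p = [:coeff p 0, coeff p 1, coeff p 2, coeff p 3:]"
  using assms
  by (intro poly_eqI)
    (auto simp: coeff_pCons coeff_eq_0 numeral_2_eq_2 numeral_3_eq_3 split: nat.split)

locale nonsingular_cubic =
  fixes a b c e :: int
  assumes leading_coeff_nonzero: "a \<noteq> 0"
    and disc_nonzero: "cubic_disc [:e, c, b, a:] \<noteq> 0"
begin

abbreviation f :: "int poly" where "f \<equiv> [:e, c, b, a:]"

abbreviation \<Delta> :: int where "\<Delta> \<equiv> cubic_disc f"

lemma disc_eq: "\<Delta> = b^2 * c^2 - 4 * a * c^3 - 4 * b^3 * e - 27 * a^2 * e^2 + 18 * a * b * c * e"
  by (simp add: cubic_disc_def numeral_3_eq_3 numeral_2_eq_2)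

definition dbl_num :: "int list" where
  "dbl_num = [a^2, 0, -2*a*c, -8*a*e, c^2 - 4*b*e]"

definition dbl_den :: "int list" where
  "dbl_den = [0, 4*a^2, 4*a*b, 4*a*c, 4*a*e]"

text \<open>
  Cubic forms eliminating q, resp. p, from \<open>dbl_num\<close> and \<open>dbl_den\<close> (lemmas \<open>elim_p\<close> and
  \<open>elim_q\<close>). Each pair solves a Sylvester system of these two quartics, which is regular
  because they have no common zero when \<open>\<Delta> \<noteq> 0\<close>.
\<close>

definition elim_p_num :: "int list" where
  "elim_p_num =
    [2916*a^5*e^4 - 3888*a^4*b*c*e^3 + 864*a^4*c^3*e^2 + 864*a^3*b^3*e^3
       + 1080*a^3*b^2*c^2*e^2 - 576*a^3*b*c^4*e + 64*a^3*c^6 - 576*a^2*b^4*c*e^2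
       + 272*a^2*b^3*c^3*e - 32*a^2*b^2*c^5 + 64*a*b^6*e^2 - 32*a*b^5*c^2*e
       + 4*a*b^4*c^4,
     2160*a^4*b*e^4 - 108*a^4*c^2*e^3 - 2304*a^3*b^2*c*e^3 + 608*a^3*b*c^3*e^2
       - 16*a^3*c^5*e + 320*a^2*b^4*e^3 + 480*a^2*b^3*c^2*e^2 - 268*a^2*b^2*c^4*e
       + 32*a^2*b*c^6 - 128*a*b^5*c*e^2 + 64*a*b^4*c^3*e - 8*a*b^3*c^5,
     2376*a^4*c*e^4 + 432*a^3*b^2*e^4 - 2988*a^3*b*c^2*e^3 + 676*a^3*c^4*e^2
       + 64*a^2*b^3*c*e^3 + 912*a^2*b^2*c^3*e^2 - 424*a^2*b*c^5*e + 48*a^2*c^7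
       + 64*a*b^5*e^3 - 224*a*b^4*c^2*e^2 + 100*a*b^3*c^4*e - 12*a*b^2*c^6,
     2592*a^4*e^5 - 3024*a^3*b*c*e^4 + 708*a^3*c^3*e^3 + 384*a^2*b^3*e^4
       + 768*a^2*b^2*c^2*e^3 - 408*a^2*b*c^4*e^2 + 48*a^2*c^6*e - 192*a*b^4*c*e^3
       + 96*a*b^3*c^3*e^2 - 12*a*b^2*c^5*e]"

definition elim_p_den :: "int list" where
  "elim_p_den =
    [- 540*a^4*b*e^4 + 27*a^4*c^2*e^3 + 576*a^3*b^2*c*e^3 - 152*a^3*b*c^3*e^2
       + 4*a^3*c^5*e - 80*a^2*b^4*e^3 - 120*a^2*b^3*c^2*e^2 + 67*a^2*b^2*c^4*e
       - 8*a^2*b*c^6 + 32*a*b^5*c*e^2 - 16*a*b^4*c^3*e + 2*a*b^3*c^5,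
     864*a^4*c*e^4 + 432*a^3*b^2*e^4 - 1224*a^3*b*c^2*e^3 + 263*a^3*c^4*e^2
       - 160*a^2*b^3*c*e^3 + 464*a^2*b^2*c^3*e^2 - 186*a^2*b*c^5*e + 20*a^2*c^7
       + 64*a*b^5*e^3 - 112*a*b^4*c^2*e^2 + 44*a*b^3*c^4*e - 5*a*b^2*c^6,
     5184*a^4*e^5 - 6264*a^3*b*c*e^4 + 1470*a^3*c^3*e^3 + 1200*a^2*b^3*e^4
       + 1464*a^2*b^2*c^2*e^3 - 857*a^2*b*c^4*e^2 + 104*a^2*c^6*e - 704*a*b^4*c*e^3
       + 416*a*b^3*c^3*e^2 - 76*a*b^2*c^5*e + 4*a*b*c^7 + 64*b^6*e^3 - 48*b^5*c^2*e^2
       + 12*b^4*c^4*e - 1*b^3*c^6,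
     2592*a^3*b*e^5 - 648*a^3*c^2*e^4 - 3024*a^2*b^2*c*e^4 + 1464*a^2*b*c^3*e^3
       - 177*a^2*c^5*e^2 + 384*a*b^4*e^4 + 672*a*b^3*c^2*e^3 - 600*a*b^2*c^4*e^2
       + 150*a*b*c^6*e - 12*a*c^8 - 192*b^5*c*e^3 + 144*b^4*c^3*e^2 - 36*b^3*c^5*e
       + 3*b^2*c^7]"

definition elim_q_num :: "int list" where
  "elim_q_num =
    [0,
     324*a^4*e^2 - 216*a^3*b*c*e + 48*a^3*c^3 + 48*a^2*b^3*e - 12*a^2*b^2*c^2,
     216*a^3*b*e^2 - 144*a^2*b^2*c*e + 32*a^2*b*c^3 + 32*a*b^4*e - 8*a*b^3*c^2,
     432*a^3*c*e^2 - 108*a^2*b^2*e^2 - 288*a^2*b*c^2*e + 64*a^2*c^4 + 136*a*b^3*c*e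
       - 32*a*b^2*c^3 - 16*b^5*e + 4*b^4*c^2]"

definition elim_q_den :: "int list" where
  "elim_q_den =
    [- 81*a^4*e^2 + 54*a^3*b*c*e - 12*a^3*c^3 - 12*a^2*b^3*e + 3*a^2*b^2*c^2,
     27*a^3*b*e^2 - 18*a^2*b^2*c*e + 4*a^2*b*c^3 + 4*a*b^4*e - 1*a*b^3*c^2,
     135*a^3*c*e^2 - 90*a^2*b*c^2*e + 20*a^2*c^4 + 20*a*b^3*c*e - 5*a*b^2*c^3,
     729*a^3*e^3 - 540*a^2*b*c*e^2 + 108*a^2*c^3*e + 108*a*b^3*e^2 + 9*a*b^2*c^2*e
       - 8*a*b*c^4 - 8*b^4*c*e + 2*b^3*c^3]"

lemma elim_p:
  "binary_form elim_p_num p q * binary_form dbl_num p q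
     + binary_form elim_p_den p q * binary_form dbl_den p q = 4 * a^3 * \<Delta>^2 * p^7"
  unfolding disc_eq elim_p_num_def elim_p_den_def dbl_num_def dbl_den_def by simp algebra

lemma elim_q:
  "binary_form elim_q_num p q * binary_form dbl_num p q
     + binary_form elim_q_den p q * binary_form dbl_den p q = 4 * \<Delta>^2 * q^7"
  unfolding disc_eq elim_q_num_def elim_q_den_def dbl_num_def dbl_den_def by simp algebra

lemma poly_f_rat:
  "poly (map_poly of_int f) x = of_int a * x^3 + of_int b * x^2 + of_int c * x + (of_int e :: rat)"
  by (simp add: map_poly_pCons algebra_simps power2_eq_square power3_eq_cube)

lemma coeff_f_rat:
  "coeff (map_poly of_int f) 2 = (of_int b :: rat)"
  "coeff (map_poly of_int f) 3 = (of_int a :: rat)"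
  by (simp_all add: map_poly_pCons numeral_2_eq_2 numeral_3_eq_3)

lemma poly_pderiv_f_rat:
  "poly (pderiv (map_poly of_int f)) x = 3 * of_int a * x^2 + 2 * of_int b * x + (of_int c :: rat)"
  by (simp add: map_poly_pCons pderiv_pCons algebra_simps power2_eq_square)

lemma on_curve_Pt_iff:
  "on_curve f d (Pt x y)
     \<longleftrightarrow> of_int d * y^2 = of_int a * x^3 + of_int b * x^2 + of_int c * x + of_int e"
  by (simp add: on_curve_def poly_f_rat)

lemma on_curve_of_int_iff: "on_curve f d (Pt (of_int x) (of_int y)) \<longleftrightarrow> d * y^2 = poly f x"
proof -
  have "on_curve f d (Pt (of_int x) (of_int y))
      \<longleftrightarrow> (of_int (d * y^2) :: rat) = of_int (a * x^3 + b * x^2 + c * x + e)"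
    unfolding on_curve_Pt_iff by simp
  also have "\<dots> \<longleftrightarrow> d * y^2 = poly f x"
    unfolding of_int_eq_iff by (simp add: algebra_simps power2_eq_square power3_eq_cube)
  finally show ?thesis .
qed

lemma ec_add_opposite: "ec_add f d (Pt x y) (Pt x (- y)) = Zero_pt"
  by simp

lemma ec_add_tangent:
  assumes "y \<noteq> 0"
  shows "ec_add f d (Pt x y) (Pt x y) =
    (let l = (3 * of_int a * x^2 + 2 * of_int b * x + of_int c) / (2 * of_int d * y);
         x' = (of_int d * l^2 - of_int b) / of_int a - x - x
     in Pt x' (l * (x - x') - y))"
proof -
  have "y + y \<noteq> 0" using assms by simp
  then show ?thesis by (simp add: Let_def coeff_f_rat poly_pderiv_f_rat)
qed

lemma ec_add_chord:
  assumes "x\<^sub>1 \<noteq> x\<^sub>2"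
  shows "ec_add f d (Pt x\<^sub>1 y\<^sub>1) (Pt x\<^sub>2 y\<^sub>2) =
    (let l = (y\<^sub>2 - y\<^sub>1) / (x\<^sub>2 - x\<^sub>1);
         x' = (of_int d * l^2 - of_int b) / of_int a - x\<^sub>1 - x\<^sub>2
     in Pt x' (l * (x\<^sub>1 - x') - y\<^sub>1))"
  using assms by (simp add: Let_def coeff_f_rat)

declare ec_add.simps(3)[simp del]

lemma on_curve_ec_add:
  assumes "d \<noteq> 0" "on_curve f d P" "on_curve f d Q"
  shows "on_curve f d (ec_add f d P Q)"
proof (cases P; cases Q)
  fix x\<^sub>1 y\<^sub>1 x\<^sub>2 y\<^sub>2
  assume P: "P = Pt x\<^sub>1 y\<^sub>1" and Q: "Q = Pt x\<^sub>2 y\<^sub>2"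
  have "(of_int a :: rat) \<noteq> 0" "(of_int d :: rat) \<noteq> 0"
    using leading_coeff_nonzero \<open>d \<noteq> 0\<close> by simp_all
  have curve\<^sub>1: "of_int d * y\<^sub>1^2 = of_int a * x\<^sub>1^3 + of_int b * x\<^sub>1^2 + of_int c * x\<^sub>1 + of_int e"
    and curve\<^sub>2: "of_int d * y\<^sub>2^2 = of_int a * x\<^sub>2^3 + of_int b * x\<^sub>2^2 + of_int c * x\<^sub>2 + of_int e"
    using assms(2,3) P Q on_curve_Pt_iff by auto
  consider "x\<^sub>1 = x\<^sub>2" "y\<^sub>1 + y\<^sub>2 = 0" | "x\<^sub>1 = x\<^sub>2" "y\<^sub>1 = y\<^sub>2" "y\<^sub>1 \<noteq> 0" | "x\<^sub>1 \<noteq> x\<^sub>2"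
  proof (cases "x\<^sub>1 = x\<^sub>2")
    case True
    then have "of_int d * y\<^sub>1^2 = of_int d * y\<^sub>2^2" using curve\<^sub>1 curve\<^sub>2 by simp
    then have "y\<^sub>1^2 = y\<^sub>2^2" using \<open>of_int d \<noteq> 0\<close> by simp
    then have "y\<^sub>1 = y\<^sub>2 \<or> y\<^sub>1 + y\<^sub>2 = 0" by (auto simp: power2_eq_iff)
    then show thesis using that True by force
  qed (use that in blast)
  then show ?thesis
  proof cases
    case 1
    then have "Q = Pt x\<^sub>1 (- y\<^sub>1)" using Q by (simp add: add_eq_0_iff)
    then show ?thesis using P by (simp add: ec_add_opposite on_curve_def)
  next
    case 2
    define l where "l = (3 * of_int a * x\<^sub>1^2 + 2 * of_int b * x\<^sub>1 + of_int c) / (2 * of_int d * y\<^sub>1)"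
    define x' where "x' = (of_int d * l^2 - of_int b) / of_int a - x\<^sub>1 - x\<^sub>1"
    have "ec_add f d P Q = Pt x' (l * (x\<^sub>1 - x') - y\<^sub>1)"
      using 2 P Q by (simp add: ec_add_tangent Let_def l_def x'_def)
    moreover have "2 * of_int d * y\<^sub>1 * l = 3 * of_int a * x\<^sub>1^2 + 2 * of_int b * x\<^sub>1 + of_int c"
      using 2 \<open>of_int d \<noteq> 0\<close> by (simp add: l_def)
    moreover have "of_int a * x' = of_int d * l^2 - of_int b - 2 * of_int a * x\<^sub>1"
      using \<open>of_int a \<noteq> 0\<close> by (simp add: x'_def field_simps)
    ultimately show ?thesis using tangent_third_point[OF curve\<^sub>1] by (simp add: on_curve_Pt_iff)
  next
    case 3
    define l where "l = (y\<^sub>2 - y\<^sub>1) / (x\<^sub>2 - x\<^sub>1)"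
    define x' where "x' = (of_int d * l^2 - of_int b) / of_int a - x\<^sub>1 - x\<^sub>2"
    have "ec_add f d P Q = Pt x' (l * (x\<^sub>1 - x') - y\<^sub>1)"
      using 3 P Q by (simp add: ec_add_chord Let_def l_def x'_def)
    moreover have "l * (x\<^sub>2 - x\<^sub>1) = y\<^sub>2 - y\<^sub>1" using 3 by (simp add: l_def)
    moreover have "of_int a * x' = of_int d * l^2 - of_int b - of_int a * x\<^sub>1 - of_int a * x\<^sub>2"
      using \<open>of_int a \<noteq> 0\<close> by (simp add: x'_def field_simps)
    ultimately show ?thesis
      using chord_third_point[OF curve\<^sub>1 curve\<^sub>2 _ _ 3] by (simp add: on_curve_Pt_iff)
  qed
qed (use assms in auto)

lemma dbl_forms_dehomogenize:
  fixes p q :: int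
  assumes "q \<noteq> 0"
  defines "x \<equiv> of_int p / of_int q :: rat"
  defines "F \<equiv> of_int a * x^3 + of_int b * x^2 + of_int c * x + of_int e"
    and "F' \<equiv> 3 * of_int a * x^2 + 2 * of_int b * x + of_int c"
  shows "of_int (binary_form dbl_den p q) = 4 * of_int a * of_int q ^ 4 * F"
    and "of_int (binary_form dbl_num p q)
           = of_int q ^ 4 * (F'^2 - (4 * of_int b + 8 * of_int a * x) * F)"
  using assms by (simp_all add: dbl_den_def dbl_num_def F_def F'_def x_def field_simps
      power2_eq_square power3_eq_cube power4_eq_xxxx)

definition dbl_x :: "int \<Rightarrow> int \<Rightarrow> rat" where
  "dbl_x p q = of_int (binary_form dbl_num p q) / of_int (binary_form dbl_den p q)"

lemma double_x_coordinate:
  assumes "d \<noteq> 0" "on_curve f d (Pt x y)" "y \<noteq> 0" "quotient_of x = (p, q)"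
  shows "binary_form dbl_den p q \<noteq> 0"
    and "\<exists>y'. ec_add f d (Pt x y) (Pt x y) = Pt (dbl_x p q) y'"
proof -
  define F where "F = of_int a * x^3 + of_int b * x^2 + of_int c * x + (of_int e :: rat)"
  define F' where "F' = 3 * of_int a * x^2 + 2 * of_int b * x + (of_int c :: rat)"
  define l where "l = F' / (2 * of_int d * y)"
  have "q > 0" and x_eq: "x = of_int p / of_int q"
    using assms(4) quotient_of_denom_pos quotient_of_div by blast+
  have "(of_int a :: rat) \<noteq> 0" "(of_int d :: rat) \<noteq> 0"
    using leading_coeff_nonzero \<open>d \<noteq> 0\<close> by simp_all
  have curve: "of_int d * y^2 = F" using assms(2) by (simp add: on_curve_Pt_iff F_def)
  then have "F \<noteq> 0" using \<open>y \<noteq> 0\<close> \<open>of_int d \<noteq> 0\<close> by auto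
  then have "(of_int (binary_form dbl_den p q) :: rat) \<noteq> 0"
    using \<open>q > 0\<close> \<open>of_int a \<noteq> 0\<close> by (simp add: dbl_forms_dehomogenize x_eq[symmetric] F_def)
  then show "binary_form dbl_den p q \<noteq> 0" by simp
  have "of_int d * l^2 = F'^2 / (4 * F)"
    unfolding l_def curve[symmetric] using \<open>y \<noteq> 0\<close> \<open>of_int d \<noteq> 0\<close>
    by (simp add: field_simps power2_eq_square)
  then have "(of_int d * l^2 - of_int b) / of_int a - x - x
      = (F'^2 - (4 * of_int b + 8 * of_int a * x) * F) / (4 * of_int a * F)"
    using \<open>F \<noteq> 0\<close> \<open>of_int a \<noteq> 0\<close> by (simp add: field_simps)
  also have "\<dots> = dbl_x p q"
    using \<open>q > 0\<close> by (simp add: dbl_x_def dbl_forms_dehomogenize x_eq[symmetric] F_def F'_def)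
  finally show "\<exists>y'. ec_add f d (Pt x y) (Pt x y) = Pt (dbl_x p q) y'"
    using \<open>y \<noteq> 0\<close> by (simp add: ec_add_tangent Let_def l_def F'_def)
qed

lemma rat_height_double_upper:
  "\<exists>B. \<forall>x p q. quotient_of x = (p, q) \<longrightarrow> binary_form dbl_den p q \<noteq> 0 \<longrightarrow>
     rat_height (dbl_x p q) \<le> B * rat_height x ^ 4"
proof -
  define B where "B = max (sum_list (map abs dbl_num)) (sum_list (map abs dbl_den))"
  have "rat_height (dbl_x p q) \<le> B * rat_height x ^ 4"
    if "quotient_of x = (p, q)" "binary_form dbl_den p q \<noteq> 0" for x p q
  proof -
    have M: "rat_height x = max \<bar>p\<bar> \<bar>q\<bar>" using that(1) by (simp add: rat_height_def)
    have "length dbl_num = 5" "length dbl_den = 5" by (simp_all add: dbl_num_def dbl_den_def)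
    then have "max \<bar>binary_form dbl_num p q\<bar> \<bar>binary_form dbl_den p q\<bar> \<le> B * rat_height x ^ 4"
      using abs_binary_form_le[of p "rat_height x" q dbl_num]
        abs_binary_form_le[of p "rat_height x" q dbl_den] unfolding M B_def
      by (auto intro: order_trans[OF _ mult_right_mono])
    then show ?thesis
      unfolding dbl_x_def by (rule order_trans[OF rat_height_fraction_le[OF that(2)]])
  qed
  then show ?thesis by blast
qed

lemma rat_height_double_lower:
  "\<exists>B. \<forall>x p q. quotient_of x = (p, q) \<longrightarrow> binary_form dbl_den p q \<noteq> 0 \<longrightarrow>
     rat_height x ^ 4 \<le> B * rat_height (dbl_x p q)"
proof -
  define S :: "int list \<Rightarrow> int" where "S ws = sum_list (map abs ws)" for ws
  define B where "B = max (S elim_p_num + S elim_p_den) (\<bar>a\<bar>^3 * (S elim_q_num + S elim_q_den))"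
  have "rat_height x ^ 4 \<le> B * rat_height (dbl_x p q)"
    if "quotient_of x = (p, q)" "binary_form dbl_den p q \<noteq> 0" for x p q
  proof -
    define N where "N = binary_form dbl_num p q"
    define D where "D = binary_form dbl_den p q"
    define M where "M = max \<bar>p\<bar> \<bar>q\<bar>"
    have "M = rat_height x" using that(1) by (simp add: M_def rat_height_def)
    then have "1 \<le> M" using rat_height_ge_1 by simp
    have form_le: "\<bar>binary_form ws p q\<bar> \<le> S ws * M ^ (length ws - 1)" for ws
      unfolding S_def M_def by (rule abs_binary_form_le) auto
    obtain p' q' where pq': "quotient_of (of_int N / of_int D) = (p', q')" by fastforce
    then obtain k where "N = k * p'" "D = k * q'"
      using quotient_of_fraction \<open>binary_form dbl_den p q \<noteq> 0\<close> unfolding D_def by blast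
    have "length elim_p_num = 4" "length elim_p_den = 4" "length elim_q_num = 4"
      "length elim_q_den = 4"
      by (simp_all add: elim_p_num_def elim_p_den_def elim_q_num_def elim_q_den_def)
    then have "\<bar>binary_form elim_p_num p q\<bar> + \<bar>binary_form elim_p_den p q\<bar>
          \<le> (S elim_p_num + S elim_p_den) * M ^ 3"
        "\<bar>a^3 * binary_form elim_q_num p q\<bar> + \<bar>a^3 * binary_form elim_q_den p q\<bar>
          \<le> \<bar>a\<bar>^3 * ((S elim_q_num + S elim_q_den) * M ^ 3)"
      using form_le[of elim_p_num] form_le[of elim_p_den] form_le[of elim_q_num]
        form_le[of elim_q_den]
      by (simp_all add: abs_mult power_abs distrib_right mult_left_mono flip: distrib_left)
    moreover have "(S elim_p_num + S elim_p_den) * M ^ 3 \<le> B * M ^ 3"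
        "\<bar>a\<bar>^3 * ((S elim_q_num + S elim_q_den) * M ^ 3) \<le> B * M ^ 3"
      unfolding B_def mult.assoc[symmetric] using \<open>1 \<le> M\<close> by (intro mult_right_mono; simp)+
    ultimately have bound_p:
        "\<bar>binary_form elim_p_num p q\<bar> + \<bar>binary_form elim_p_den p q\<bar> \<le> B * M ^ 3"
      and bound_q: "\<bar>a^3 * binary_form elim_q_num p q\<bar> + \<bar>a^3 * binary_form elim_q_den p q\<bar>
          \<le> B * M ^ 3"
      by linarith+
    have elim_p': "binary_form elim_p_num p q * N + binary_form elim_p_den p q * D
        = 4 * a^3 * \<Delta>^2 * p ^ (3 + 4)"
      using elim_p by (simp add: N_def D_def)
    have elim_q': "(a^3 * binary_form elim_q_num p q) * N + (a^3 * binary_form elim_q_den p q) * D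
        = 4 * a^3 * \<Delta>^2 * q ^ (3 + 4)"
      using arg_cong[OF elim_q, of "(*) (a^3)"] by (simp add: N_def D_def algebra_simps)
    have "coprime p q" using that(1) by (rule quotient_of_coprime)
    moreover have "4 * a^3 * \<Delta>^2 \<noteq> 0" using leading_coeff_nonzero disc_nonzero by simp
    ultimately have "M ^ 4 \<le> B * max \<bar>p'\<bar> \<bar>q'\<bar>"
      using coprime_elimination_height_bound[OF _ _ elim_p' elim_q'] bound_p bound_q
        \<open>N = k * p'\<close> \<open>D = k * q'\<close>
      unfolding M_def by blast
    then show ?thesis
      using pq' \<open>M = rat_height x\<close> by (simp add: dbl_x_def N_def D_def rat_height_def)
  qed
  then show ?thesis by blast
qed

lemma hx_double_bound:
  "\<exists>K. \<forall>d P. d \<noteq> 0 \<longrightarrow> on_curve f d P \<longrightarrow> \<bar>hx (ec_add f d P P) - 4 * hx P\<bar> \<le> K"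
proof -
  obtain B\<^sub>u B\<^sub>l where
    upper: "\<And>x p q. quotient_of x = (p, q) \<Longrightarrow> binary_form dbl_den p q \<noteq> 0 \<Longrightarrow>
      rat_height (dbl_x p q) \<le> B\<^sub>u * rat_height x ^ 4" and
    lower: "\<And>x p q. quotient_of x = (p, q) \<Longrightarrow> binary_form dbl_den p q \<noteq> 0 \<Longrightarrow>
      rat_height x ^ 4 \<le> B\<^sub>l * rat_height (dbl_x p q)"
    using rat_height_double_upper rat_height_double_lower by blast
  define roots where "roots = {r. poly (map_poly of_int f) r = (0 :: rat)}"
  define K\<^sub>r where "K\<^sub>r = (\<Sum>r\<in>roots. ln (rat_height r))"
  have "finite roots"
    unfolding roots_def using leading_coeff_nonzero
    by (intro poly_roots_finite) (simp add: map_poly_pCons)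
  have ln_height_nonneg: "0 \<le> ln (rat_height r)" for r
    using rat_height_ge_1[of r] by simp
  have root_bound: "ln (rat_height r) \<le> K\<^sub>r" if "r \<in> roots" for r
    unfolding K\<^sub>r_def using that ln_height_nonneg \<open>finite roots\<close> by (rule member_le_sum)
  have "0 \<le> K\<^sub>r" unfolding K\<^sub>r_def using ln_height_nonneg by (simp add: sum_nonneg)
  have "\<bar>hx (ec_add f d P P) - 4 * hx P\<bar> \<le> max (max (ln B\<^sub>u) (ln B\<^sub>l)) (4 * K\<^sub>r)"
    if "d \<noteq> 0" "on_curve f d P" for d P
  proof (cases P)
    case Zero_pt
    then show ?thesis using \<open>0 \<le> K\<^sub>r\<close> by simp
  next
    case (Pt x y)
    show ?thesis
    proof (cases "y = 0")
      case True
      then have "x \<in> roots" using \<open>on_curve f d P\<close> Pt by (simp add: on_curve_def roots_def)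
      moreover have "ec_add f d P P = Zero_pt" using Pt True ec_add_opposite[of d x 0] by simp
      ultimately show ?thesis
        using Pt root_bound[of x] ln_height_nonneg[of x] by (simp add: hx_Pt)
    next
      case False
      obtain p q where pq: "quotient_of x = (p, q)" by fastforce
      have "on_curve f d (Pt x y)" using \<open>on_curve f d P\<close> Pt by simp
      note double = double_x_coordinate[OF \<open>d \<noteq> 0\<close> this False pq]
      then obtain y' where "ec_add f d P P = Pt (dbl_x p q) y'" using Pt by blast
      moreover have "\<bar>ln (rat_height (dbl_x p q)) - 4 * ln (rat_height x)\<bar> \<le> max (ln B\<^sub>u) (ln B\<^sub>l)"
        using abs_ln_sub_le[of "rat_height x" "rat_height (dbl_x p q)" B\<^sub>u 4 B\<^sub>l]
          upper[OF pq double(1)] lower[OF pq double(1)]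
          rat_height_ge_1[of x] rat_height_ge_1[of "dbl_x p q"]
        by (simp flip: of_int_power of_int_mult add: of_int_le_iff)
      ultimately show ?thesis using Pt by (simp add: hx_Pt max.coboundedI1)
    qed
  qed
  then show ?thesis by blast
qed

lemma canon_height_hx_bound:
  "\<exists>K. \<forall>d P. d \<noteq> 0 \<longrightarrow> on_curve f d P \<longrightarrow> \<bar>2 * canon_height f d P - hx P\<bar> \<le> K"
proof -
  obtain K where K: "\<And>d P. d \<noteq> 0 \<Longrightarrow> on_curve f d P \<Longrightarrow> \<bar>hx (ec_add f d P P) - 4 * hx P\<bar> \<le> K"
    using hx_double_bound by blast
  have "\<bar>2 * canon_height f d P - hx P\<bar> \<le> K / 3" if "d \<noteq> 0" "on_curve f d P" for d P
  proof -
    define double where "double R = ec_add f d R R" for R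
    have on_curve_iter: "on_curve f d ((double ^^ n) P)" for n
      by (induction n) (simp_all add: double_def on_curve_ec_add \<open>d \<noteq> 0\<close> \<open>on_curve f d P\<close>)
    have "\<bar>lim (\<lambda>n. hx ((double ^^ n) P) / 4 ^ n) - hx ((double ^^ 0) P)\<bar> \<le> K / (4 - 1)"
      using K[OF \<open>d \<noteq> 0\<close> on_curve_iter]
      by (intro lim_scaled_sequence_bound) (simp_all add: double_def)
    then show ?thesis by (simp add: canon_height_def double_def[abs_def])
  qed
  then show ?thesis by blast
qed

lemma abs_poly_f_le:
  assumes "\<bar>x\<bar> \<le> M" "1 \<le> M"
  shows "\<bar>poly f x\<bar> \<le> (\<bar>a\<bar> + \<bar>b\<bar> + \<bar>c\<bar> + \<bar>e\<bar>) * M ^ 3"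
proof -
  have "poly f x = binary_form [a, b, c, e] x 1"
    by (simp add: algebra_simps power2_eq_square power3_eq_cube)
  also have "\<bar>\<dots>\<bar> \<le> sum_list (map abs [a, b, c, e]) * M ^ (length [a, b, c, e] - 1)"
    using assms by (intro abs_binary_form_le) auto
  finally show ?thesis by (simp add: add.assoc power3_eq_cube)
qed

lemma chord_x_coordinate:
  fixes x\<^sub>1 y\<^sub>1 x\<^sub>2 y\<^sub>2 :: int
  assumes "x\<^sub>1 \<noteq> x\<^sub>2"
  shows "\<exists>y. ec_add f d (Pt (of_int x\<^sub>1) (of_int y\<^sub>1)) (Pt (of_int x\<^sub>2) (of_int y\<^sub>2)) =
    Pt (of_int (d * (y\<^sub>2 - y\<^sub>1)^2 - (b + a * x\<^sub>1 + a * x\<^sub>2) * (x\<^sub>2 - x\<^sub>1)^2)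
        / of_int (a * (x\<^sub>2 - x\<^sub>1)^2)) y"
proof -
  define l where "l = (of_int y\<^sub>2 - of_int y\<^sub>1) / (of_int x\<^sub>2 - of_int x\<^sub>1 :: rat)"
  define x' where "x' = (of_int d * l^2 - of_int b) / of_int a - of_int x\<^sub>1 - (of_int x\<^sub>2 :: rat)"
  have "l * (of_int x\<^sub>2 - of_int x\<^sub>1) = of_int y\<^sub>2 - of_int y\<^sub>1"
    using assms by (simp add: l_def)
  moreover have
    "of_int a * x' = of_int d * l^2 - of_int b - of_int a * of_int x\<^sub>1 - of_int a * of_int x\<^sub>2"
    using leading_coeff_nonzero by (simp add: x'_def field_simps)
  ultimately have "x' * of_int (a * (x\<^sub>2 - x\<^sub>1)^2)
      = of_int (d * (y\<^sub>2 - y\<^sub>1)^2 - (b + a * x\<^sub>1 + a * x\<^sub>2) * (x\<^sub>2 - x\<^sub>1)^2)"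
    by simp algebra
  moreover have "a * (x\<^sub>2 - x\<^sub>1)^2 \<noteq> 0" using assms leading_coeff_nonzero by simp
  ultimately have "x' = of_int (d * (y\<^sub>2 - y\<^sub>1)^2 - (b + a * x\<^sub>1 + a * x\<^sub>2) * (x\<^sub>2 - x\<^sub>1)^2)
      / of_int (a * (x\<^sub>2 - x\<^sub>1)^2)"
    by (simp add: eq_divide_eq)
  then show ?thesis using assms by (simp add: ec_add_chord Let_def l_def x'_def)
qed

lemma chord_num_den_le:
  fixes x y x' y' M :: int
  defines "A \<equiv> \<bar>a\<bar> + \<bar>b\<bar> + \<bar>c\<bar> + \<bar>e\<bar>"
  assumes curve: "d * y^2 = poly f x" "d * y'^2 = poly f x'"
    and bounds: "\<bar>x\<bar> \<le> M" "\<bar>x'\<bar> \<le> M" "1 \<le> M"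
  shows "\<bar>d * (y' - y)^2 - (b + a * x + a * x') * (x' - x)^2\<bar> \<le> 12 * A * M^3"
    and "\<bar>a * (x' - x)^2\<bar> \<le> 12 * A * M^3"
proof -
  have "(y' - y)^2 \<le> 2 * (y^2 + y'^2)"
    using zero_le_power2[of "y' + y"] by (simp add: power2_eq_square algebra_simps)
  then have "\<bar>d\<bar> * (y' - y)^2 \<le> \<bar>d\<bar> * (2 * (y^2 + y'^2))" by (rule mult_left_mono) simp
  then have "\<bar>d * (y' - y)^2\<bar> \<le> 2 * (\<bar>d * y^2\<bar> + \<bar>d * y'^2\<bar>)"
    by (simp add: abs_mult algebra_simps)
  also have "\<dots> \<le> 2 * (A * M^3 + A * M^3)"
    unfolding A_def curve by (intro mult_left_mono add_mono abs_poly_f_le bounds) simp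
  finally have num\<^sub>1: "\<bar>d * (y' - y)^2\<bar> \<le> 4 * A * M^3" by simp
  have "\<bar>x' - x\<bar> \<le> 2 * M" using bounds by linarith
  then have diff_sq: "(x' - x)^2 \<le> 4 * M^2"
    using power_mono[of "\<bar>x' - x\<bar>" "2 * M" 2] by (simp add: power_mult_distrib)
  have "\<bar>b + a * x + a * x'\<bar> \<le> \<bar>b\<bar> + \<bar>a * x\<bar> + \<bar>a * x'\<bar>"
    using abs_triangle_ineq[of "b + a * x" "a * x'"] abs_triangle_ineq[of b "a * x"] by linarith
  also have "\<dots> \<le> \<bar>b\<bar> * M + \<bar>a\<bar> * M + \<bar>a\<bar> * M"
    using bounds by (intro add_mono) (auto simp: abs_mult mult_left_mono mult_le_cancel_left1)
  also have "\<dots> \<le> (2 * A) * M" using bounds by (simp add: A_def algebra_simps mult_right_mono)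
  finally have "\<bar>(b + a * x + a * x') * (x' - x)^2\<bar> \<le> (2 * A * M) * (4 * M^2)"
    using diff_sq unfolding abs_mult by (intro mult_mono) auto
  then have num\<^sub>2: "\<bar>(b + a * x + a * x') * (x' - x)^2\<bar> \<le> 8 * A * M^3"
    by (simp add: power2_eq_square power3_eq_cube)
  show "\<bar>d * (y' - y)^2 - (b + a * x + a * x') * (x' - x)^2\<bar> \<le> 12 * A * M^3"
    using abs_triangle_ineq4[of "d * (y' - y)^2" "(b + a * x + a * x') * (x' - x)^2"] num\<^sub>1 num\<^sub>2
    by linarith
  have "M^2 \<le> M^3" "0 \<le> M^3" using \<open>1 \<le> M\<close> by (auto intro: power_increasing)
  then have "4 * M^2 \<le> 12 * M^3" by linarith
  then have "\<bar>a\<bar> * (x' - x)^2 \<le> A * (12 * M^3)"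
    using diff_sq by (intro mult_mono) (simp_all add: A_def)
  then show "\<bar>a * (x' - x)^2\<bar> \<le> 12 * A * M^3" by (simp add: abs_mult)
qed

lemma hx_add_integral_bound:
  "\<exists>C. \<forall>d x y x' y'. d \<noteq> 0 \<longrightarrow> d * y^2 = poly f x \<longrightarrow> d * y'^2 = poly f x' \<longrightarrow>
     (x, y) \<noteq> (x', y') \<longrightarrow>
     hx (ec_add f d (Pt (of_int x) (of_int y)) (Pt (of_int x') (of_int y')))
       \<le> C + 3 * max (hx (Pt (of_int x) (of_int y))) (hx (Pt (of_int x') (of_int y')))"
proof -
  define A where "A = \<bar>a\<bar> + \<bar>b\<bar> + \<bar>c\<bar> + \<bar>e\<bar>"
  have "1 \<le> A" using leading_coeff_nonzero by (simp add: A_def)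
  have "hx (ec_add f d (Pt (of_int x) (of_int y)) (Pt (of_int x') (of_int y')))
       \<le> ln (12 * A) + 3 * max (hx (Pt (of_int x) (of_int y))) (hx (Pt (of_int x') (of_int y')))"
    if "d \<noteq> 0" and curve: "d * y^2 = poly f x" "d * y'^2 = poly f x'" and "(x, y) \<noteq> (x', y')"
    for d x y x' y'
  proof (cases "x = x'")
    case True
    then have "d * y^2 = d * y'^2" using curve by simp
    then have "y^2 = y'^2" using \<open>d \<noteq> 0\<close> by simp
    then have "y' = - y" using True \<open>(x, y) \<noteq> (x', y')\<close> by (auto simp: power2_eq_iff)
    moreover have "0 \<le> ln (12 * A)" using \<open>1 \<le> A\<close> by simp
    moreover have "0 \<le> max (hx (Pt (of_int x) (of_int y))) (hx (Pt (of_int x') (of_int y')))"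
      using hx_nonneg by (simp add: le_max_iff_disj)
    ultimately show ?thesis using True by (simp add: ec_add_opposite)
  next
    case False
    define M where "M = max (max \<bar>x\<bar> \<bar>x'\<bar>) 1"
    define N where "N = d * (y' - y)^2 - (b + a * x + a * x') * (x' - x)^2"
    define D where "D = a * (x' - x)^2"
    have "D \<noteq> 0" using False leading_coeff_nonzero by (simp add: D_def)
    have "\<bar>x\<bar> \<le> M" "\<bar>x'\<bar> \<le> M" "1 \<le> M" by (simp_all add: M_def)
    then have "\<bar>N\<bar> \<le> 12 * A * M^3" "\<bar>D\<bar> \<le> 12 * A * M^3"
      using chord_num_den_le[OF curve] by (simp_all add: N_def D_def A_def)
    then have "real_of_int (rat_height (of_int N / of_int D)) \<le> (12 * A) * real_of_int M ^ 3"
      using rat_height_fraction_le[OF \<open>D \<noteq> 0\<close>, of N]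
      by (simp flip: of_int_le_iff of_int_mult of_int_power)
    then have "ln (rat_height (of_int N / of_int D)) \<le> ln ((12 * A) * real_of_int M ^ 3)"
      using rat_height_ge_1[of "of_int N / of_int D"] by simp
    also have "\<dots> = ln (12 * A) + 3 * ln M"
      using \<open>1 \<le> A\<close> \<open>1 \<le> M\<close> by (simp add: ln_mult ln_realpow)
    also have "ln M \<le> max (hx (Pt (of_int x) (of_int y))) (hx (Pt (of_int x') (of_int y')))"
      by (auto simp: hx_Pt rat_height_of_int M_def max_def)
    moreover obtain y'' where "ec_add f d (Pt (of_int x) (of_int y)) (Pt (of_int x') (of_int y')) =
        Pt (of_int N / of_int D) y''"
      using chord_x_coordinate[OF False] unfolding N_def D_def by blast
    ultimately show ?thesis by (simp add: hx_Pt)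
  qed
  then show ?thesis by blast
qed

lemma canon_height_add_integral_bound:
  "\<exists>C. \<forall>d x y x' y'. d \<noteq> 0 \<longrightarrow> d * y^2 = poly f x \<longrightarrow> d * y'^2 = poly f x' \<longrightarrow>
     (x, y) \<noteq> (x', y') \<longrightarrow>
     canon_height f d (ec_add f d (Pt (of_int x) (of_int y)) (Pt (of_int x') (of_int y')))
       \<le> 3 * max (canon_height f d (Pt (of_int x) (of_int y)))
                 (canon_height f d (Pt (of_int x') (of_int y'))) + C"
proof -
  obtain K where K: "\<And>d P. d \<noteq> 0 \<Longrightarrow> on_curve f d P \<Longrightarrow> \<bar>2 * canon_height f d P - hx P\<bar> \<le> K"
    using canon_height_hx_bound by blast
  obtain C where C: "\<And>d x y x' y'. d \<noteq> 0 \<Longrightarrow> d * y^2 = poly f x \<Longrightarrow> d * y'^2 = poly f x' \<Longrightarrow>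
      (x, y) \<noteq> (x', y') \<Longrightarrow> hx (ec_add f d (Pt (of_int x) (of_int y)) (Pt (of_int x') (of_int y')))
        \<le> C + 3 * max (hx (Pt (of_int x) (of_int y))) (hx (Pt (of_int x') (of_int y')))"
    using hx_add_integral_bound by blast
  have "canon_height f d (ec_add f d P P')
      \<le> 3 * max (canon_height f d P) (canon_height f d P') + (C / 2 + 2 * K)"
    if "d \<noteq> 0" "d * y^2 = poly f x" "d * y'^2 = poly f x'" "(x, y) \<noteq> (x', y')"
      and "P = Pt (of_int x) (of_int y)" "P' = Pt (of_int x') (of_int y')" for d x y x' y' P P'
  proof -
    have on_curve: "on_curve f d P" "on_curve f d P'"
      using that by (simp_all add: on_curve_of_int_iff)
    then have "on_curve f d (ec_add f d P P')" by (intro on_curve_ec_add \<open>d \<noteq> 0\<close>)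
    with on_curve have "\<bar>2 * canon_height f d P - hx P\<bar> \<le> K" "\<bar>2 * canon_height f d P' - hx P'\<bar> \<le> K"
      "\<bar>2 * canon_height f d (ec_add f d P P') - hx (ec_add f d P P')\<bar> \<le> K"
      using K[OF \<open>d \<noteq> 0\<close>] by blast+
    moreover have "hx (ec_add f d P P') \<le> C + 3 * max (hx P) (hx P')"
      using C[OF that(1-4)] that(5,6) by simp
    ultimately show ?thesis unfolding max_def abs_le_iff by (auto split: if_splits)
  qed
  then show ?thesis by blast
qed

end

theorem lemma4p17:
  fixes f :: "int poly"
  assumes "degree f = 3" and "cubic_disc f \<noteq> 0"
  shows "\<exists>C::real. \<forall>(d::int) (x::int) (y::int) (x'::int) (y'::int).
     squarefree d \<longrightarrow> d * y^2 = poly f x \<longrightarrow> d * y'^2 = poly f x' \<longrightarrow> (x, y) \<noteq> (x', y') \<longrightarrow>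
     canon_height f d (ec_add f d (Pt (of_int x) (of_int y)) (Pt (of_int x') (of_int y')))
       \<le> 3 * max (canon_height f d (Pt (of_int x) (of_int y)))
                 (canon_height f d (Pt (of_int x') (of_int y'))) + C"
proof -
  obtain a b c e where f_eq: "f = [:e, c, b, a:]"
    using degree_3_poly_eq[OF assms(1)] by blast
  have "coeff f 3 \<noteq> 0" using assms(1) leading_coeff_0_iff[of f] by auto
  then have "a \<noteq> 0" by (simp add: f_eq numeral_3_eq_3)
  then have "nonsingular_cubic a b c e"
    using assms(2) unfolding f_eq by unfold_locales
  from nonsingular_cubic.canon_height_add_integral_bound[OF this]
  show ?thesis unfolding f_eq by (metis not_squarefree_0)
qed

end
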